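(* Let $\mu>0$, $k>0$, $y(x)=-k(1-x)$, and let $x_l$, $m(x)$ and $N(x,\xi)$ be as in the context. Then $\partial_\xi N(x,\xi)>0$ for every $x\in(x_l,1)$ and every $\xi\in(0,1)$.
   Context: Let $g(u)=u^2(1-u)$ and $G(u)=u^3/3-u^4/4$ for $u\in[0,1]$. Let $x_l\in(0,1)$ be the abscissa of the unique intersection in $(0,1)$ of the line $v=y(u)$ with the curve $v^2=2\mu G(u)$, $v<0$. For $x\in(x_l,1)$, $m(x)\in(0,x)$ is the unique number with $2\mu G(m(x))=2\mu G(x)-y(x)^2$; $m$ is $\mathcal{C}^1$. Define, for $x\in(x_l,1)$ and $\xi\in[0,1]$, writing $z=x-(x-m(x))\xi$, $$N(x,\xi)=(1-m'(x))\bigl(y(x)^2+2\mu(G(z)-G(x))\bigr)-(x-m(x))\Bigl(y(x)y'(x)+\mu\bigl(g(z)\,(1-(1-m'(x))\xi)-g(x)\bigr)\Bigr).$$ *)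

theory Defs
  imports "HOL-Analysis.Analysis"
begin

definition gA :: "real \<Rightarrow> real" where
  "gA u = u^2 * (1 - u)"

definition GA :: "real \<Rightarrow> real" where
  "GA u = u^3 / 3 - u^4 / 4"

definition yA :: "real \<Rightarrow> real \<Rightarrow> real" where
  "yA k u = - k * (1 - u)"

definition xlA :: "real \<Rightarrow> real \<Rightarrow> real" where
  "xlA mu k = (THE u. 0 < u \<and> u < 1 \<and> yA k u < 0 \<and> (yA k u)^2 = 2 * mu * GA u)"

definition mA :: "real \<Rightarrow> real \<Rightarrow> real \<Rightarrow> real" where
  "mA mu k x = (THE z. 0 < z \<and> z < x \<and> 2 * mu * GA z = 2 * mu * GA x - (yA k x)^2)"

definition NA :: "real \<Rightarrow> real \<Rightarrow> real \<Rightarrow> real \<Rightarrow> real" where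
  "NA mu k x \<xi> =
    (let m = mA mu k x; m' = deriv (mA mu k) x; z = x - (x - m) * \<xi>
     in (1 - m') * ((yA k x)^2 + 2 * mu * (GA z - GA x))
        - (x - m) * (yA k x * deriv (yA k) x
                     + mu * (gA z * (1 - (1 - m') * \<xi>) - gA x)))"

end

(*
  Differentiating in xi gives  d/dxi N = mu (x - m) E  with
  E = (x - m) g'(z) (1 - (1 - m') xi) - (1 - m') g(z).  Differentiating the relation
  G(m) = G(x) - y(x)^2 / (2 mu) (m = G^-1 (...) by the inverse function theorem) and using
  it once more gives  (1 - x) m' g(m) = (1 - x) g(x) + 2 (G(x) - G(m)),  which eliminates
  mu and k.  With  K(u) = (1 - u) g(u) + 2 G(u),  increasing since K'(u) = 2 u (1 - u)^2,
  one then has the polynomial identity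
    (1 - x) g(m) E = 2 g(m) (x - m) z (1 - z)^2
                     + (K(x) - K(m)) (z^2 (1 - x) + 2 (x - m) xi z (1 - z)),
  whose right-hand side is positive because 0 < m < z < x < 1.
*)
theory Submission
  imports Defs
begin

lemma strict_mono_on_if_deriv_pos:
  fixes f f' :: "real \<Rightarrow> real"
  assumes "continuous_on {a..b} f"
    and "\<And>u. a < u \<Longrightarrow> u < b \<Longrightarrow> (f has_real_derivative f' u) (at u)"
    and "\<And>u. a < u \<Longrightarrow> u < b \<Longrightarrow> 0 < f' u"
  shows "strict_mono_on {a..b} f"
proof (rule strict_mono_onI)
  fix s t assume st: "s \<in> {a..b}" "t \<in> {a..b}" "s < t"
  show "f s < f t"
  proof (rule DERIV_pos_imp_increasing_open[OF \<open>s < t\<close>])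
    fix u assume "s < u" "u < t"
    with st have "a < u" "u < b"
      by auto
    then show "\<exists>y. (f has_real_derivative y) (at u) \<and> 0 < y"
      using assms(2,3) by blast
  next
    show "continuous_on {s..t} f"
      using st by (intro continuous_on_subset[OF assms(1)]) auto
  qed
qed

lemma GA_has_real_derivative: "(GA has_real_derivative gA u) (at u)"
  unfolding GA_def gA_def
  by (auto intro!: derivative_eq_intros simp: algebra_simps power2_eq_square power3_eq_cube)

lemma continuous_on_GA: "continuous_on S GA"
  unfolding GA_def by (intro continuous_intros) auto

lemma GA_strict_mono_on: "strict_mono_on {0..1} GA"
  by (rule strict_mono_on_if_deriv_pos[OF continuous_on_GA GA_has_real_derivative])
    (simp add: gA_def)

lemma inj_on_GA: "inj_on GA {0..1}"
  by (rule strict_mono_on_imp_inj_on[OF GA_strict_mono_on])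

lemma GA_less_iff:
  assumes "a \<in> {0..1}" "b \<in> {0..1}"
  shows "GA a < GA b \<longleftrightarrow> a < b"
  using assms strict_mono_on_less[OF GA_strict_mono_on] by blast

lemma GA_image: "GA ` {0..1} = {0..1/12}"
proof
  show "GA ` {0..1} \<subseteq> {0..1/12}"
    using GA_less_iff[of 0] GA_less_iff[of _ 1] by (force simp: GA_def)
  show "{0..1/12} \<subseteq> GA ` {0..1}"
    using IVT'[of GA 0 _ 1, OF _ _ _ continuous_on_GA] by (force simp: GA_def)
qed

definition KA :: "real \<Rightarrow> real" where
  "KA u = (1 - u) * gA u + 2 * GA u"

lemma KA_has_real_derivative: "(KA has_real_derivative 2 * u * (1 - u)^2) (at u)"
  unfolding KA_def GA_def gA_def
  by (auto intro!: derivative_eq_intros simp: algebra_simps power2_eq_square power3_eq_cube)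

lemma KA_strict_mono_on: "strict_mono_on {0..1} KA"
  by (rule strict_mono_on_if_deriv_pos[OF _ KA_has_real_derivative])
    (auto simp: KA_def GA_def gA_def intro!: continuous_intros)

lemma yA_power2: "(yA k u)^2 = k^2 * (1 - u)^2"
  by (simp add: yA_def power_mult_distrib)

lemma xlA_bounds_and_gap:
  fixes mu k :: real
  assumes "0 < mu" "0 < k"
  shows "0 < xlA mu k" "xlA mu k < 1"
    and "\<And>x. xlA mu k < x \<Longrightarrow> x \<le> 1 \<Longrightarrow> (yA k x)^2 < 2 * mu * GA x"
proof -
  define \<phi> where "\<phi> u = (yA k u)^2 - 2 * mu * GA u" for u
  have \<phi>_less: "\<phi> b < \<phi> a" if "a \<in> {0..1}" "b \<in> {0..1}" "a < b" for a b
  proof -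
    have "k^2 * (1 - b)^2 \<le> k^2 * (1 - a)^2"
      using that by (intro mult_left_mono power_mono) auto
    moreover have "mu * GA a < mu * GA b"
      using GA_less_iff that \<open>0 < mu\<close> by simp
    ultimately show ?thesis
      unfolding \<phi>_def yA_power2 by linarith
  qed
  have "\<exists>u. 0 \<le> u \<and> u \<le> 1 \<and> \<phi> u = 0"
    using assms by (intro IVT2') (auto simp: \<phi>_def yA_def GA_def intro!: continuous_intros)
  then obtain u0 where "0 \<le> u0" "u0 \<le> 1" "\<phi> u0 = 0"
    by blast
  moreover have "u0 \<noteq> 0" "u0 \<noteq> 1"
    using \<open>\<phi> u0 = 0\<close> assms by (auto simp: \<phi>_def yA_def GA_def)
  ultimately have u0: "0 < u0" "u0 < 1" "\<phi> u0 = 0"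
    by auto
  have "xlA mu k = u0"
    unfolding xlA_def
  proof (rule the_equality)
    show "0 < u0 \<and> u0 < 1 \<and> yA k u0 < 0 \<and> (yA k u0)^2 = 2 * mu * GA u0"
      using u0 assms by (simp add: \<phi>_def yA_def)
    fix u assume "0 < u \<and> u < 1 \<and> yA k u < 0 \<and> (yA k u)^2 = 2 * mu * GA u"
    then show "u = u0"
      using \<phi>_less[of u u0] \<phi>_less[of u0 u] u0 by (force simp: \<phi>_def)
  qed
  then show "0 < xlA mu k" "xlA mu k < 1"
    using u0 by auto
  fix x assume "xlA mu k < x" "x \<le> 1"
  then show "(yA k x)^2 < 2 * mu * GA x"
    using \<phi>_less[of u0 x] u0 \<open>xlA mu k = u0\<close> by (simp add: \<phi>_def)
qed

lemma mA_bounds_and_eq: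
  fixes mu k x :: real
  assumes "0 < mu" "0 < k" "xlA mu k < x" "x < 1"
  shows "0 < mA mu k x" "mA mu k x < x"
    and "GA (mA mu k x) = GA x - (yA k x)^2 / (2 * mu)"
proof -
  define c where "c = GA x - (yA k x)^2 / (2 * mu)"
  have "0 < x"
    using xlA_bounds_and_gap(1)[OF assms(1,2)] assms(3) by linarith
  have "0 < c"
    using xlA_bounds_and_gap(3)[OF assms(1,2,3)] assms by (simp add: c_def field_simps)
  moreover have "c < GA x"
    using assms by (simp add: c_def yA_def)
  moreover have "GA x \<le> 1/12"
    using GA_image \<open>0 < x\<close> \<open>x < 1\<close> by auto
  ultimately have "c \<in> GA ` {0..1}"
    unfolding GA_image by simp
  then obtain w where w: "w \<in> {0..1}" "GA w = c"
    by blast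
  have "w \<noteq> 0"
    using w \<open>0 < c\<close> by (auto simp: GA_def)
  have "w < x"
    using GA_less_iff[of w x] w \<open>c < GA x\<close> \<open>0 < x\<close> \<open>x < 1\<close> by simp
  have w_eq: "2 * mu * GA w = 2 * mu * GA x - (yA k x)^2"
    using w assms(1) by (simp add: c_def field_simps)
  have "mA mu k x = w"
    unfolding mA_def
  proof (rule the_equality)
    show "0 < w \<and> w < x \<and> 2 * mu * GA w = 2 * mu * GA x - (yA k x)^2"
      using \<open>w \<noteq> 0\<close> \<open>w < x\<close> w(1) w_eq by simp
    fix z assume z: "0 < z \<and> z < x \<and> 2 * mu * GA z = 2 * mu * GA x - (yA k x)^2"
    with w_eq have "mu * GA z = mu * GA w"
      by linarith
    then have "GA z = GA w"
      using assms(1) by simp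
    moreover have "z \<in> {0..1}"
      using z assms(4) by simp
    ultimately show "z = w"
      using inj_onD[OF inj_on_GA] w(1) by blast
  qed
  then show "0 < mA mu k x" "mA mu k x < x" "GA (mA mu k x) = c"
    using w \<open>w \<noteq> 0\<close> \<open>w < x\<close> by auto
qed

lemma mA_eq_inv_into:
  fixes mu k x :: real
  assumes "0 < mu" "0 < k" "xlA mu k < x" "x < 1"
  shows "mA mu k x = inv_into {0..1} GA (GA x - (yA k x)^2 / (2 * mu))"
proof -
  have "mA mu k x \<in> {0..1}"
    using mA_bounds_and_eq(1,2)[OF assms] assms(4) by simp
  then show ?thesis
    using inv_into_f_eq[OF inj_on_GA _ mA_bounds_and_eq(3)[OF assms]] by simp
qed

lemma mA_has_real_derivative:
  fixes mu k x :: real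
  assumes "0 < mu" "0 < k" "xlA mu k < x" "x < 1"
  shows "(mA mu k has_real_derivative (gA x + k^2 * (1 - x) / mu) / gA (mA mu k x)) (at x)"
proof -
  define h where "h t = GA t - (yA k t)^2 / (2 * mu)" for t
  define m where "m = mA mu k x"
  have m: "0 < m" "m < 1" "GA m = h x"
    using mA_bounds_and_eq[OF assms] assms(4) by (auto simp: m_def h_def)
  have "((\<lambda>t. (yA k t)^2 / (2 * mu)) has_real_derivative - (k^2 * (1 - x) / mu)) (at x)"
    unfolding yA_power2 using assms(1)
    by (auto intro!: derivative_eq_intros simp: field_simps power2_eq_square)
  from DERIV_diff[OF GA_has_real_derivative this]
  have h_deriv: "(h has_real_derivative gA x + k^2 * (1 - x) / mu) (at x)"
    by (simp add: h_def[abs_def])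
  have "0 < h x" "h x < 1/12"
    using m GA_less_iff[of 0 m] GA_less_iff[of m 1] by (auto simp: GA_def)
  moreover have "isCont (inv_into {0..1} GA) (GA m)"
  proof (rule isCont_inverse_function2[where f = GA])
    fix z :: real assume "0 \<le> z" "z \<le> 1"
    then show "inv_into {0..1} GA (GA z) = z"
      using inj_on_GA by simp
    show "isCont GA z"
      by (rule DERIV_isCont[OF GA_has_real_derivative])
  qed (use m in auto)
  moreover have "GA (inv_into {0..1} GA c) = c" if "0 < c" "c < 1/12" for c
    using that by (intro f_inv_into_f) (simp add: GA_image)
  moreover have "gA m \<noteq> 0"
    using m by (simp add: gA_def)
  ultimately have inv_deriv: "(inv_into {0..1} GA has_real_derivative inverse (gA m)) (at (h x))"
    using m(1,2) GA_has_real_derivative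
    by (intro DERIV_inverse_function[where f = GA and a = 0 and b = "1/12"])
      (auto simp: m(3)[symmetric] inj_on_GA)
  have "((\<lambda>t. inv_into {0..1} GA (h t)) has_real_derivative
          (gA x + k^2 * (1 - x) / mu) / gA m) (at x)"
    using DERIV_chain2[OF inv_deriv h_deriv] by (simp add: divide_inverse mult.commute)
  then show ?thesis
    unfolding m_def
    by (rule has_field_derivative_transform_within_open[where S = "{xlA mu k<..<1}"])
      (use assms mA_eq_inv_into[OF assms(1,2)] in \<open>auto simp: h_def\<close>)
qed

lemma mA_deriv_relation:
  fixes mu k x :: real
  assumes "0 < mu" "0 < k" "xlA mu k < x" "x < 1"
  shows "(1 - x) * deriv (mA mu k) x * gA (mA mu k x)
           = (1 - x) * gA x + 2 * (GA x - GA (mA mu k x))"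
proof -
  define m where "m = mA mu k x"
  have "gA m \<noteq> 0"
    using mA_bounds_and_eq(1,2)[OF assms] assms(4) by (simp add: m_def gA_def)
  moreover have "deriv (mA mu k) x = (gA x + k^2 * (1 - x) / mu) / gA m"
    unfolding m_def by (rule DERIV_imp_deriv[OF mA_has_real_derivative[OF assms]])
  ultimately have "(1 - x) * deriv (mA mu k) x * gA m = (1 - x) * (gA x + k^2 * (1 - x) / mu)"
    by simp
  also have "\<dots> = (1 - x) * gA x + k^2 * (1 - x)^2 / mu"
    using assms(1) by (simp add: field_simps power2_eq_square)
  also have "k^2 * (1 - x)^2 / mu = 2 * (GA x - GA m)"
    using mA_bounds_and_eq(3)[OF assms] assms(1) by (simp add: m_def yA_power2 field_simps)
  finally show ?thesis
    unfolding m_def .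
qed

lemma NA_has_real_derivative:
  fixes mu k x \<xi> :: real
  defines "m \<equiv> mA mu k x" and "m' \<equiv> deriv (mA mu k) x" and "z \<equiv> x - (x - mA mu k x) * \<xi>"
  shows "((\<lambda>t. NA mu k x t) has_real_derivative
           mu * (x - m) * ((x - m) * (2 * z - 3 * z^2) * (1 - (1 - m') * \<xi>) - (1 - m') * gA z))
         (at \<xi>)"
  unfolding NA_def Let_def m_def[symmetric] m'_def[symmetric] z_def[folded m_def] GA_def gA_def
  by (auto intro!: derivative_eq_intros) algebra

lemma NA_slope_factor_identity:
  fixes m x \<xi> m' :: real
  assumes "(1 - x) * m' * gA m = (1 - x) * gA x + 2 * (GA x - GA m)"
  defines "z \<equiv> x - (x - m) * \<xi>"
  shows "(1 - x) * gA m * ((x - m) * (2 * z - 3 * z^2) * (1 - (1 - m') * \<xi>) - (1 - m') * gA z)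
       = 2 * gA m * (x - m) * z * (1 - z)^2
         + (KA x - KA m) * (z^2 * (1 - x) + 2 * (x - m) * \<xi> * z * (1 - z))"
  using assms unfolding z_def KA_def GA_def gA_def by algebra

lemma NA_slope_factor_pos:
  fixes m x \<xi> m' :: real
  assumes m: "0 < m" "m < x" and "x < 1" and \<xi>: "0 < \<xi>" "\<xi> < 1"
    and "(1 - x) * m' * gA m = (1 - x) * gA x + 2 * (GA x - GA m)"
  defines "z \<equiv> x - (x - m) * \<xi>"
  shows "0 < (x - m) * (2 * z - 3 * z^2) * (1 - (1 - m') * \<xi>) - (1 - m') * gA z"
proof -
  have "0 < (x - m) * \<xi>" "(x - m) * \<xi> < x - m"
    using m \<xi> by simp_all
  then have z: "m < z" "z < x"
    by (simp_all add: z_def)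
  have "0 < gA m"
    using m \<open>x < 1\<close> by (simp add: gA_def)
  then have pos: "0 < (1 - x) * gA m"
    using \<open>x < 1\<close> by simp
  have "KA m < KA x"
    using strict_mono_onD[OF KA_strict_mono_on] m \<open>x < 1\<close> by simp
  then have "0 < 2 * gA m * (x - m) * z * (1 - z)^2
      + (KA x - KA m) * (z^2 * (1 - x) + 2 * (x - m) * \<xi> * z * (1 - z))"
    using \<open>0 < gA m\<close> m z \<xi> \<open>x < 1\<close>
    by (intro add_pos_nonneg mult_pos_pos mult_nonneg_nonneg) auto
  also have "\<dots> = (1 - x) * gA m
      * ((x - m) * (2 * z - 3 * z^2) * (1 - (1 - m') * \<xi>) - (1 - m') * gA z)"
    unfolding z_def by (rule NA_slope_factor_identity[symmetric]) fact
  finally show ?thesis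
    by (rule zero_less_mult_pos[OF _ pos])
qed

theorem lemmaA2:
  fixes mu k x \<xi> :: real
  assumes "mu > 0" and "k > 0"
    and "xlA mu k < x" and "x < 1"
    and "0 < \<xi>" and "\<xi> < 1"
  shows "\<exists>D. ((\<lambda>t. NA mu k x t) has_real_derivative D) (at \<xi>) \<and> D > 0"
proof -
  define m where "m = mA mu k x"
  define m' where "m' = deriv (mA mu k) x"
  define z where "z = x - (x - m) * \<xi>"
  have m: "0 < m" "m < x"
    using mA_bounds_and_eq(1,2)[OF assms(1-4)] by (simp_all add: m_def)
  have "0 < (x - m) * (2 * z - 3 * z^2) * (1 - (1 - m') * \<xi>) - (1 - m') * gA z"
      (is "0 < ?E")
    unfolding z_def
    by (rule NA_slope_factor_pos[OF m assms(4-6)])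
      (use mA_deriv_relation[OF assms(1-4)] in \<open>simp add: m_def m'_def\<close>)
  then have "0 < mu * (x - m) * ?E"
    using m assms(1) by simp
  then show ?thesis
    using NA_has_real_derivative[of mu k x \<xi>] unfolding m_def m'_def z_def by blast
qed

end
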